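(* Let $X$ be a finite set and $t$ a full support transition function. Then $t$ is menu invariant (i.e. the stationary distributions $\nu_A$ of $M_A$ coincide for all $A\in\mathcal{X}_2$) if and only if $t$ satisfies no investment: for every strict investment plan $i$ and every $\delta\in(0,1)$ there exists $\succ\in\mathcal{L}(X)$ such that $$\sum_{(A,\succ')\in\mathcal{X}_2\times\mathcal{L}(X)}\delta\, i(A,\succ')\,t_{\succ'}(M(\succ,A),\succ)<\sum_{A\in\mathcal{X}_2} i(A,\succ).$$
   Context: $X$ is a finite set; $\mathcal{X}_2$ is the collection of subsets of $X$ with at least two elements; $\mathcal{L}(X)$ the linear orders on $X$; $M(\succ,A)$ the $\succ$-maximal element of $A$. A transition function is $t:X\times\mathcal{L}(X)\to\Delta(\mathcal{L}(X))$, full support if all its values have full support; $t_{\succ'}(x,\succ)$ is the probability of $\succ'$ under $t(x,\succ)$. For $A\in\mathcal{X}_2$, $M_A$ is the Markov matrix on $\mathcal{L}(X)$ with entries $m_A(\succ,\succ')=t_{\succ'}(M(\succ,A),\succ)$, which for full support $t$ has a unique stationary distribution $\nu_A$. An investment plan is a function $i:\mathcal{X}_2\times\mathcal{L}(X)\to\mathbb{R}_{\ge 0}$; it is strict if it is not identically zero. *)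

theory Defs
  imports Complex_Main
begin

text \<open>The ground set X is the (finite) universe of the type 'a.
  A linear order \<succ> is a strict linear order r on UNIV, with (x,y) in r meaning x \<succ> y.\<close>

definition lin_orders :: "'a rel set" where
  "lin_orders = {r. strict_linear_order_on UNIV r}"

definition menus2 :: "'a set set" where
  "menus2 = {A. 2 \<le> card A}"

definition maxel :: "'a rel \<Rightarrow> 'a set \<Rightarrow> 'a" where
  "maxel r A = (THE x. x \<in> A \<and> (\<forall>y\<in>A. y \<noteq> x \<longrightarrow> (x, y) \<in> r))"

text \<open>A transition function t : X x L(X) -> Delta(L(X)), where t x r r' is the
  probability of r' under t(x,r).\<close>
definition transition_fun :: "('a \<Rightarrow> 'a rel \<Rightarrow> 'a rel \<Rightarrow> real) \<Rightarrow> bool" where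
  "transition_fun t \<longleftrightarrow> (\<forall>x r. r \<in> lin_orders \<longrightarrow>
      (\<forall>r'\<in>lin_orders. 0 \<le> t x r r') \<and> (\<Sum>r'\<in>lin_orders. t x r r') = 1)"

definition full_support :: "('a \<Rightarrow> 'a rel \<Rightarrow> 'a rel \<Rightarrow> real) \<Rightarrow> bool" where
  "full_support t \<longleftrightarrow> (\<forall>x. \<forall>r\<in>lin_orders. \<forall>r'\<in>lin_orders. 0 < t x r r')"

definition markov_entry :: "('a \<Rightarrow> 'a rel \<Rightarrow> 'a rel \<Rightarrow> real) \<Rightarrow> 'a set \<Rightarrow> 'a rel \<Rightarrow> 'a rel \<Rightarrow> real" where
  "markov_entry t A r r' = t (maxel r A) r r'"

definition stationary :: "('a \<Rightarrow> 'a rel \<Rightarrow> 'a rel \<Rightarrow> real) \<Rightarrow> 'a set \<Rightarrow> ('a rel \<Rightarrow> real) \<Rightarrow> bool" where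
  "stationary t A \<nu> \<longleftrightarrow>
     (\<forall>r. r \<notin> lin_orders \<longrightarrow> \<nu> r = 0) \<and> (\<forall>r\<in>lin_orders. 0 \<le> \<nu> r) \<and>
     (\<Sum>r\<in>lin_orders. \<nu> r) = 1 \<and>
     (\<forall>r'\<in>lin_orders. (\<Sum>r\<in>lin_orders. \<nu> r * markov_entry t A r r') = \<nu> r')"

text \<open>The (unique, for full support t) stationary distribution nu_A.\<close>
definition stat_dist :: "('a \<Rightarrow> 'a rel \<Rightarrow> 'a rel \<Rightarrow> real) \<Rightarrow> 'a set \<Rightarrow> 'a rel \<Rightarrow> real" where
  "stat_dist t A = (THE \<nu>. stationary t A \<nu>)"

definition menu_invariant :: "('a \<Rightarrow> 'a rel \<Rightarrow> 'a rel \<Rightarrow> real) \<Rightarrow> bool" where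
  "menu_invariant t \<longleftrightarrow> (\<forall>A\<in>menus2. \<forall>B\<in>menus2. stat_dist t A = stat_dist t B)"

definition investment_plan :: "('a set \<Rightarrow> 'a rel \<Rightarrow> real) \<Rightarrow> bool" where
  "investment_plan i \<longleftrightarrow> (\<forall>A\<in>menus2. \<forall>r\<in>lin_orders. 0 \<le> i A r)"

definition strict_plan :: "('a set \<Rightarrow> 'a rel \<Rightarrow> real) \<Rightarrow> bool" where
  "strict_plan i \<longleftrightarrow> (\<exists>A\<in>menus2. \<exists>r\<in>lin_orders. i A r \<noteq> 0)"

definition no_investment :: "('a \<Rightarrow> 'a rel \<Rightarrow> 'a rel \<Rightarrow> real) \<Rightarrow> bool" where
  "no_investment t \<longleftrightarrow>
     (\<forall>i. investment_plan i \<and> strict_plan i \<longrightarrow>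
        (\<forall>\<delta>::real. 0 < \<delta> \<and> \<delta> < 1 \<longrightarrow>
           (\<exists>r\<in>lin_orders.
              (\<Sum>A\<in>menus2. \<Sum>r'\<in>lin_orders. \<delta> * i A r' * t (maxel r A) r r')
              < (\<Sum>A\<in>menus2. i A r))))"

end

theory Submission
  imports Defs "HOL-Analysis.Analysis"
begin

text \<open>
  For a stochastic matrix \<open>P\<close> with positive entries, the invariant distribution \<open>\<nu>\<close> is unique
  and positive, and the Poisson equation \<open>P v = v + u\<close> is solvable exactly when \<open>\<nu>\<cdot>u = 0\<close>.

  If all menus share \<open>\<nu>\<close> and some strict plan \<open>i\<close> had discounted return at least \<open>\<Sum>\<^sub>A i A r\<close>
  in every state \<open>r\<close>, weighting by \<open>\<nu>\<close> would give \<open>D \<le> \<delta> D\<close> for the positive total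
  \<open>D = \<Sum>\<^sub>A \<Sum>\<^sub>r \<nu> r i A r\<close>.

  If \<open>\<nu>\<^sub>A \<noteq> \<nu>\<^sub>B\<close>, split the constant \<open>1\<close> as \<open>u + (1 - u)\<close> with
  \<open>\<nu>\<^sub>A\<cdot>u = 0 = \<nu>\<^sub>B\<cdot>(1 - u)\<close> and solve \<open>M\<^sub>A v = v + u\<close>, \<open>M\<^sub>B w = w + 1 - u\<close> with \<open>v, w \<ge> 1\<close>.
  Investing \<open>v\<close> in \<open>A\<close> and \<open>w\<close> in \<open>B\<close> then returns \<open>v + w + 1\<close> in every state, which beats
  \<open>v + w\<close> once \<open>\<delta>\<close> is close to \<open>1\<close>.
\<close>

text \<open>A square linear system on the coordinates in \<open>L\<close> is encoded as an endomorphism of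
  \<open>real^'b\<close> acting as the identity off \<open>L\<close>, so that injective implies surjective applies.\<close>
lemma linear_system_solvable_if_injective:
  fixes F :: "('b::finite \<Rightarrow> real) \<Rightarrow> 'b \<Rightarrow> real"
  assumes add: "\<And>f g r. r \<in> L \<Longrightarrow> F (\<lambda>s. f s + g s) r = F f r + F g r"
    and scale: "\<And>c f r. r \<in> L \<Longrightarrow> F (\<lambda>s. c * f s) r = c * F f r"
    and injective: "\<And>f. \<forall>r\<in>L. F f r = 0 \<Longrightarrow> \<forall>r\<in>L. f r = 0"
  shows "\<exists>f. \<forall>r\<in>L. F f r = u r"
proof -
  define H :: "real^'b \<Rightarrow> real^'b"
    where "H x = (\<chi> r. if r \<in> L then F (vec_nth x) r else x $ r)" for x
  have "linear H"
  proof (rule linearI)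
    fix x y :: "real^'b" and c :: real
    have "vec_nth (x + y) = (\<lambda>s. x $ s + y $ s)" "vec_nth (c *\<^sub>R x) = (\<lambda>s. c * x $ s)"
      by auto
    then show "H (x + y) = H x + H y" "H (c *\<^sub>R x) = c *\<^sub>R H x"
      by (simp_all add: H_def vec_eq_iff add scale)
  qed
  moreover have "inj H"
    unfolding linear_injective_0[OF \<open>linear H\<close>]
  proof (intro allI impI)
    fix x assume "H x = 0"
    then have "\<forall>r\<in>L. F (vec_nth x) r = 0" and "\<forall>r. r \<notin> L \<longrightarrow> x $ r = 0"
      by (auto simp: H_def vec_eq_iff split: if_splits)
    with injective show "x = 0" by (metis vec_eq_iff zero_index)
  qed
  ultimately obtain x where "H x = (\<chi> r. u r)"
    by (metis linear_inj_imp_surj surjD)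
  then show ?thesis
    by (intro exI[of _ "vec_nth x"]) (metis (mono_tags) H_def vec_lambda_beta)
qed

definition invariant_on :: "'b set \<Rightarrow> ('b \<Rightarrow> 'b \<Rightarrow> real) \<Rightarrow> ('b \<Rightarrow> real) \<Rightarrow> bool" where
  "invariant_on L p \<nu> \<longleftrightarrow> (\<forall>s\<in>L. (\<Sum>r\<in>L. \<nu> r * p r s) = \<nu> s)"

definition invariant_distribution_on ::
    "'b set \<Rightarrow> ('b \<Rightarrow> 'b \<Rightarrow> real) \<Rightarrow> ('b \<Rightarrow> real) \<Rightarrow> bool" where
  "invariant_distribution_on L p \<nu> \<longleftrightarrow>
     (\<forall>r\<in>L. 0 \<le> \<nu> r) \<and> (\<Sum>r\<in>L. \<nu> r) = 1 \<and> invariant_on L p \<nu>"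

lemma invariant_on_add:
  "invariant_on L p x \<Longrightarrow> invariant_on L p y \<Longrightarrow> invariant_on L p (\<lambda>r. x r + y r)"
  by (simp add: invariant_on_def distrib_right sum.distrib)

lemma invariant_on_diff:
  "invariant_on L p x \<Longrightarrow> invariant_on L p y \<Longrightarrow> invariant_on L p (\<lambda>r. x r - y r)"
  by (simp add: invariant_on_def left_diff_distrib sum_subtractf)

lemma invariant_on_scale:
  "invariant_on L p x \<Longrightarrow> invariant_on L p (\<lambda>r. c * x r)"
  by (simp add: invariant_on_def sum_distrib_left mult.assoc flip: sum_distrib_left)

lemma invariant_on_sum_mult:
  assumes "invariant_on L p \<nu>"
  shows "(\<Sum>r\<in>L. \<nu> r * (\<Sum>s\<in>L. p r s * x s)) = (\<Sum>s\<in>L. \<nu> s * x s)"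
proof -
  have "(\<Sum>r\<in>L. \<nu> r * (\<Sum>s\<in>L. p r s * x s)) = (\<Sum>s\<in>L. (\<Sum>r\<in>L. \<nu> r * p r s) * x s)"
    unfolding sum_distrib_left sum_distrib_right by (subst sum.swap) (simp add: mult.assoc)
  also have "\<dots> = (\<Sum>s\<in>L. \<nu> s * x s)"
    using assms by (simp add: invariant_on_def)
  finally show ?thesis .
qed

locale positive_stochastic =
  fixes L :: "'b::finite set" and p :: "'b \<Rightarrow> 'b \<Rightarrow> real"
  assumes entry_pos: "r \<in> L \<Longrightarrow> s \<in> L \<Longrightarrow> 0 < p r s"
    and row_sum: "r \<in> L \<Longrightarrow> (\<Sum>s\<in>L. p r s) = 1"
begin

lemma sum_row_vector_mult: "(\<Sum>s\<in>L. \<Sum>r\<in>L. y r * p r s) = (\<Sum>r\<in>L. y r)"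
proof -
  have "(\<Sum>s\<in>L. \<Sum>r\<in>L. y r * p r s) = (\<Sum>r\<in>L. y r * (\<Sum>s\<in>L. p r s))"
    unfolding sum_distrib_left by (rule sum.swap)
  then show ?thesis
    by (simp add: row_sum)
qed

lemma invariant_on_nonneg_pos:
  assumes inv: "invariant_on L p y" and nonneg: "\<And>r. r \<in> L \<Longrightarrow> 0 \<le> y r"
    and "r1 \<in> L" "0 < y r1" and "s \<in> L"
  shows "0 < y s"
proof -
  have "0 < (\<Sum>r\<in>L. y r * p r s)"
    using assms entry_pos[of _ s] by (intro sum_pos2[where i = r1]) (auto intro: mult_nonneg_nonneg less_imp_le)
  with inv \<open>s \<in> L\<close> show ?thesis
    by (simp add: invariant_on_def)
qed

lemma invariant_on_abs:
  assumes inv: "invariant_on L p y"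
  shows "invariant_on L p (\<lambda>r. \<bar>y r\<bar>)"
proof -
  have le: "\<bar>y s\<bar> \<le> (\<Sum>r\<in>L. \<bar>y r\<bar> * p r s)" if "s \<in> L" for s
  proof -
    have "\<bar>y s\<bar> = \<bar>\<Sum>r\<in>L. y r * p r s\<bar>"
      using inv that by (simp add: invariant_on_def)
    also have "\<dots> \<le> (\<Sum>r\<in>L. \<bar>y r\<bar> * p r s)"
      using sum_abs[of "\<lambda>r. y r * p r s" L] entry_pos[OF _ that]
      by (simp add: abs_mult less_imp_le)
    finally show ?thesis .
  qed
  have "(\<Sum>s\<in>L. (\<Sum>r\<in>L. \<bar>y r\<bar> * p r s) - \<bar>y s\<bar>) = 0"
    by (simp add: sum_subtractf sum_row_vector_mult)
  then have "\<forall>s\<in>L. (\<Sum>r\<in>L. \<bar>y r\<bar> * p r s) - \<bar>y s\<bar> = 0"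
    using le by (subst (asm) sum_nonneg_eq_0_iff) auto
  then show ?thesis
    by (simp add: invariant_on_def)
qed

text \<open>The positive part \<open>\<bar>z\<bar> + z\<close> of an invariant \<open>z\<close> is invariant, hence vanishes identically or
  is positive everywhere; the latter would make the total mass of \<open>z\<close> positive.\<close>
lemma invariant_on_sum_zero:
  assumes inv: "invariant_on L p z" and sum_zero: "(\<Sum>r\<in>L. z r) = 0" and "r \<in> L"
  shows "z r = 0"
proof -
  have pos_part: "invariant_on L p (\<lambda>r. \<bar>z r\<bar> + z r)"
    using inv by (intro invariant_on_add invariant_on_abs)
  have nonpos: "z s \<le> 0" if "s \<in> L" for s
  proof (rule ccontr)
    assume "\<not> z s \<le> 0"
    then have "0 < \<bar>z r'\<bar> + z r'" if "r' \<in> L" for r'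
      using invariant_on_nonneg_pos[OF pos_part _ \<open>s \<in> L\<close> _ that] by auto
    then have "0 < z r'" if "r' \<in> L" for r'
      using that by fastforce
    then have "0 < (\<Sum>r\<in>L. z r)"
      using \<open>r \<in> L\<close> by (intro sum_pos) auto
    with sum_zero show False
      by simp
  qed
  have "\<forall>s\<in>L. - z s = 0"
    using sum_zero nonpos by (subst sum_nonneg_eq_0_iff[symmetric]) (auto simp: sum_negf)
  with \<open>r \<in> L\<close> show ?thesis
    by simp
qed

lemma invariant_distribution_on_unique:
  assumes "invariant_distribution_on L p \<nu>" "invariant_distribution_on L p \<mu>" "r \<in> L"
  shows "\<nu> r = \<mu> r"
  using invariant_on_sum_zero[of "\<lambda>r. \<nu> r - \<mu> r" r] assms
  by (simp add: invariant_distribution_on_def invariant_on_diff sum_subtractf)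

lemma invariant_distribution_on_pos:
  assumes dist: "invariant_distribution_on L p \<nu>" and "s \<in> L"
  shows "0 < \<nu> s"
proof -
  have "\<exists>r1\<in>L. 0 < \<nu> r1"
  proof (rule ccontr)
    assume "\<not> ?thesis"
    then have "(\<Sum>r\<in>L. \<nu> r) \<le> 0"
      by (intro sum_nonpos) (simp add: not_less)
    with dist show False
      by (simp add: invariant_distribution_on_def)
  qed
  with assms show ?thesis
    unfolding invariant_distribution_on_def by (metis invariant_on_nonneg_pos)
qed

text \<open>The map \<open>y \<mapsto> y P - y\<close> takes values of total mass zero, so it is not onto and hence
  has a nontrivial kernel.\<close>
lemma ex_invariant_on_nonzero:
  assumes "s0 \<in> L"
  obtains y r where "invariant_on L p y" and "r \<in> L" and "y r \<noteq> 0"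
proof -
  define G where "G y s = (\<Sum>r\<in>L. y r * p r s) - y s" for y s
  have "\<exists>y. invariant_on L p y \<and> (\<exists>r\<in>L. y r \<noteq> 0)"
  proof (rule ccontr)
    assume "\<not> ?thesis"
    then have "\<exists>y. \<forall>s\<in>L. G y s = (if s = s0 then 1 else 0)"
      by (intro linear_system_solvable_if_injective)
        (auto simp: G_def invariant_on_def sum.distrib sum_distrib_left algebra_simps)
    then obtain y where y: "\<forall>s\<in>L. G y s = (if s = s0 then 1 else 0)" ..
    have "(\<Sum>s\<in>L. G y s) = 0"
      by (simp add: G_def sum_subtractf sum_row_vector_mult)
    moreover have "(\<Sum>s\<in>L. G y s) = 1"
      using y \<open>s0 \<in> L\<close> by (simp add: sum.cong[OF refl, of L "G y"])
    ultimately show False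
      by simp
  qed
  with that show thesis
    by blast
qed

lemma ex_invariant_distribution_on:
  assumes "L \<noteq> {}"
  obtains \<nu> where "invariant_distribution_on L p \<nu>" and "\<And>r. r \<notin> L \<Longrightarrow> \<nu> r = 0"
proof -
  from assms obtain y r1 where inv: "invariant_on L p y" and "r1 \<in> L" "y r1 \<noteq> 0"
    by (metis ex_in_conv ex_invariant_on_nonzero)
  define S where "S = (\<Sum>r\<in>L. \<bar>y r\<bar>)"
  have "0 < S"
    unfolding S_def using \<open>r1 \<in> L\<close> \<open>y r1 \<noteq> 0\<close> by (intro sum_pos2[where i = r1]) auto
  define \<nu> where "\<nu> r = (if r \<in> L then \<bar>y r\<bar> / S else 0)" for r
  have "invariant_on L p (\<lambda>r. \<bar>y r\<bar> / S)"
    using invariant_on_scale[OF invariant_on_abs[OF inv], of "1 / S"] by simp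
  then have "invariant_on L p \<nu>"
    by (simp add: invariant_on_def \<nu>_def)
  moreover have "(\<Sum>r\<in>L. \<nu> r) = 1"
    using \<open>0 < S\<close> by (simp add: \<nu>_def S_def flip: sum_divide_distrib)
  moreover have "\<forall>r\<in>L. 0 \<le> \<nu> r"
    using \<open>0 < S\<close> by (simp add: \<nu>_def)
  ultimately show thesis
    by (intro that[of \<nu>]) (simp_all add: invariant_distribution_on_def \<nu>_def)
qed

text \<open>Maximum principle: a positive average equals the maximum only if all values do.\<close>
lemma harmonic_const:
  assumes harmonic: "\<And>r. r \<in> L \<Longrightarrow> (\<Sum>s\<in>L. p r s * x s) = x r" and "r \<in> L" "s \<in> L"
  shows "x r = x s"
proof -
  define m where "m = Max (x ` L)"
  have "m \<in> x ` L"
    unfolding m_def using \<open>r \<in> L\<close> by (intro Max_in) auto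
  then obtain rm where "rm \<in> L" "x rm = m"
    by auto
  have nonneg: "0 \<le> p rm s * (m - x s)" if "s \<in> L" for s
    using that entry_pos[OF \<open>rm \<in> L\<close> that] by (simp add: m_def)
  have "(\<Sum>s\<in>L. p rm s * (m - x s)) = m * (\<Sum>s\<in>L. p rm s) - (\<Sum>s\<in>L. p rm s * x s)"
    by (simp add: right_diff_distrib sum_subtractf sum_distrib_left mult.commute)
  also have "\<dots> = 0"
    using row_sum harmonic \<open>rm \<in> L\<close> \<open>x rm = m\<close> by simp
  finally have "\<forall>s\<in>L. p rm s * (m - x s) = 0"
    using nonneg by (subst (asm) sum_nonneg_eq_0_iff) auto
  then have "\<forall>s\<in>L. x s = m"
    using entry_pos[OF \<open>rm \<in> L\<close>] by fastforce
  with assms show ?thesis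
    by simp
qed

text \<open>The map \<open>x \<mapsto> x - P x + \<nu>\<cdot>x\<close> is injective by the maximum principle,
  hence onto, and \<open>\<nu>\<cdot>u = 0\<close> forces the correction term \<open>\<nu>\<cdot>x\<close> of a preimage of \<open>-u\<close> to vanish.\<close>
lemma poisson_solvable:
  assumes dist: "invariant_distribution_on L p \<nu>" and orth: "(\<Sum>r\<in>L. \<nu> r * u r) = 0"
  obtains x where "\<And>r. r \<in> L \<Longrightarrow> (\<Sum>s\<in>L. p r s * x s) = x r + u r"
proof -
  define F where "F x r = x r - (\<Sum>s\<in>L. p r s * x s) + (\<Sum>s\<in>L. \<nu> s * x s)" for x r
  have mean: "(\<Sum>r\<in>L. \<nu> r * F x r) = (\<Sum>s\<in>L. \<nu> s * x s)" for x
  proof -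
    have "(\<Sum>r\<in>L. \<nu> r * (x r - (\<Sum>s\<in>L. p r s * x s) + c))
        = (\<Sum>r\<in>L. \<nu> r * x r) - (\<Sum>r\<in>L. \<nu> r * (\<Sum>s\<in>L. p r s * x s)) + (\<Sum>r\<in>L. \<nu> r) * c"
      for c
      by (simp add: distrib_left right_diff_distrib sum.distrib sum_subtractf sum_distrib_right)
    with dist show ?thesis
      by (simp add: F_def invariant_distribution_on_def invariant_on_sum_mult)
  qed
  have "\<exists>x. \<forall>r\<in>L. F x r = - u r"
  proof (rule linear_system_solvable_if_injective)
    show "F (\<lambda>s. x s + y s) r = F x r + F y r" for x y r
      by (simp add: F_def distrib_left sum.distrib)
    show "F (\<lambda>s. c * x s) r = c * F x r" for c x r
      by (simp add: F_def right_diff_distrib distrib_left sum_distrib_left mult.left_commute)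
    fix x assume F0: "\<forall>r\<in>L. F x r = 0"
    then have "(\<Sum>s\<in>L. \<nu> s * x s) = 0"
      using mean[of x] by simp
    with F0 have harmonic: "(\<Sum>s\<in>L. p r s * x s) = x r" if "r \<in> L" for r
      using that by (simp add: F_def)
    have "(\<Sum>s\<in>L. \<nu> s * x s) = x r" if "r \<in> L" for r
    proof -
      have "(\<Sum>s\<in>L. \<nu> s * x s) = (\<Sum>s\<in>L. \<nu> s * x r)"
        using harmonic_const[OF harmonic that] by (intro sum.cong) auto
      also have "\<dots> = x r"
        using dist by (simp add: invariant_distribution_on_def flip: sum_distrib_right)
      finally show ?thesis .
    qed
    with \<open>(\<Sum>s\<in>L. \<nu> s * x s) = 0\<close> show "\<forall>r\<in>L. x r = 0"
      by simp
  qed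
  then obtain x where x: "\<forall>r\<in>L. F x r = - u r" ..
  then have "(\<Sum>s\<in>L. \<nu> s * x s) = 0"
    using mean[of x] orth by (simp add: sum_negf)
  with x show thesis
    by (intro that[of x]) (simp add: F_def algebra_simps eq_neg_iff_add_eq_0)
qed

lemma poisson_solvable_ge:
  assumes "invariant_distribution_on L p \<nu>" and "(\<Sum>r\<in>L. \<nu> r * u r) = 0"
  obtains x where "\<And>r. r \<in> L \<Longrightarrow> c \<le> x r"
    and "\<And>r. r \<in> L \<Longrightarrow> (\<Sum>s\<in>L. p r s * x s) = x r + u r"
proof -
  obtain y where y: "\<And>r. r \<in> L \<Longrightarrow> (\<Sum>s\<in>L. p r s * y s) = y r + u r"
    using poisson_solvable[OF assms] by blast
  define k where "k = c + (\<Sum>s\<in>L. \<bar>y s\<bar>)"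
  show thesis
  proof (rule that[of "\<lambda>r. y r + k"])
    show "c \<le> y r + k" if "r \<in> L" for r
      using member_le_sum[of r L "\<lambda>s. \<bar>y s\<bar>"] that by (simp add: k_def)
    show "(\<Sum>s\<in>L. p r s * (y s + k)) = y r + k + u r" if "r \<in> L" for r
      using y[OF that] row_sum[OF that]
      by (simp add: distrib_left sum.distrib flip: sum_distrib_right)
  qed
qed

end

lemma ex_discounted_return_less:
  fixes P :: "'c \<Rightarrow> 'b \<Rightarrow> 'b \<Rightarrow> real"
  assumes "finite M" "finite L"
    and \<nu>_pos: "\<And>r. r \<in> L \<Longrightarrow> 0 < \<nu> r"
    and inv: "\<And>A. A \<in> M \<Longrightarrow> invariant_on L (P A) \<nu>"
    and i_nonneg: "\<And>A r. A \<in> M \<Longrightarrow> r \<in> L \<Longrightarrow> 0 \<le> i A r"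
    and "A0 \<in> M" "r0 \<in> L" "i A0 r0 \<noteq> 0" and "\<delta> < 1"
  shows "\<exists>r\<in>L. (\<Sum>A\<in>M. \<Sum>r'\<in>L. \<delta> * i A r' * P A r r') < (\<Sum>A\<in>M. i A r)"
proof (rule ccontr)
  assume "\<not> ?thesis"
  then have ge: "(\<Sum>A\<in>M. i A r) \<le> (\<Sum>A\<in>M. \<Sum>r'\<in>L. \<delta> * i A r' * P A r r')" if "r \<in> L" for r
    using that by (simp add: not_less)
  define D where "D = (\<Sum>A\<in>M. \<Sum>r\<in>L. \<nu> r * i A r)"
  have term_nonneg: "0 \<le> \<nu> r * i A r" if "A \<in> M" "r \<in> L" for A r
    using \<nu>_pos[OF that(2)] i_nonneg[OF that] by simp
  have "0 < \<nu> r0 * i A0 r0"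
    using \<nu>_pos[OF \<open>r0 \<in> L\<close>] i_nonneg[OF \<open>A0 \<in> M\<close> \<open>r0 \<in> L\<close>] \<open>i A0 r0 \<noteq> 0\<close> by simp
  then have "0 < (\<Sum>r\<in>L. \<nu> r * i A0 r)"
    using \<open>finite L\<close> \<open>r0 \<in> L\<close> \<open>A0 \<in> M\<close> term_nonneg by (intro sum_pos2[where i = r0]) auto
  then have "0 < D"
    unfolding D_def using \<open>finite M\<close> \<open>A0 \<in> M\<close> term_nonneg
    by (intro sum_pos2[where i = A0] sum_nonneg) auto
  have "D = (\<Sum>r\<in>L. \<nu> r * (\<Sum>A\<in>M. i A r))"
    unfolding D_def sum_distrib_left by (rule sum.swap)
  also have "\<dots> \<le> (\<Sum>r\<in>L. \<nu> r * (\<Sum>A\<in>M. \<Sum>r'\<in>L. \<delta> * i A r' * P A r r'))"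
    by (rule sum_mono) (simp add: ge \<nu>_pos mult_left_mono less_imp_le)
  also have "\<dots> = (\<Sum>A\<in>M. \<Sum>r\<in>L. \<nu> r * (\<Sum>r'\<in>L. \<delta> * i A r' * P A r r'))"
    by (simp only: sum_distrib_left) (rule sum.swap)
  also have "\<dots> = (\<Sum>A\<in>M. \<delta> * (\<Sum>r\<in>L. \<nu> r * (\<Sum>r'\<in>L. P A r r' * i A r')))"
    by (simp add: sum_distrib_left mult_ac)
  also have "\<dots> = (\<Sum>A\<in>M. \<delta> * (\<Sum>r\<in>L. \<nu> r * i A r))"
    using inv by (intro sum.cong refl) (simp add: invariant_on_sum_mult)
  also have "\<dots> = \<delta> * D"
    by (simp add: D_def sum_distrib_left)
  finally have "D \<le> \<delta> * D" .
  with \<open>0 < D\<close> \<open>\<delta> < 1\<close> show False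
    by (simp add: mult_le_cancel_right1)
qed

lemma ex_potentials_if_invariant_distributions_differ:
  assumes p: "positive_stochastic L p" and q: "positive_stochastic L q"
    and \<nu>: "invariant_distribution_on L p \<nu>" and \<mu>: "invariant_distribution_on L q \<mu>"
    and "r0 \<in> L" "\<nu> r0 \<noteq> \<mu> r0"
  obtains v w where "\<And>r. r \<in> L \<Longrightarrow> 1 \<le> v r" "\<And>r. r \<in> L \<Longrightarrow> 1 \<le> w r"
    and "\<And>r. r \<in> L \<Longrightarrow> (\<Sum>s\<in>L. p r s * v s) + (\<Sum>s\<in>L. q r s * w s) = v r + w r + 1"
proof -
  define d where "d = \<mu> r0 - \<nu> r0"
  define u where "u r = (of_bool (r = r0) - \<nu> r0) / d" for r
  have weighted: "(\<Sum>r\<in>L. \<pi> r * u r) = (\<pi> r0 - \<nu> r0) / d" if "(\<Sum>r\<in>L. \<pi> r) = 1" for \<pi>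
  proof -
    have "(\<Sum>r\<in>L. \<pi> r * u r) = ((\<Sum>r\<in>L. \<pi> r * of_bool (r = r0)) - \<nu> r0 * (\<Sum>r\<in>L. \<pi> r)) / d"
      by (simp add: u_def sum_divide_distrib diff_divide_distrib right_diff_distrib sum_subtractf
          sum_distrib_left mult.commute del: sum_mult_of_bool_eq)
    with that \<open>r0 \<in> L\<close> show ?thesis
      by simp
  qed
  have "(\<Sum>r\<in>L. \<nu> r * u r) = 0"
    using weighted \<nu> by (simp add: invariant_distribution_on_def)
  then obtain v where v: "\<And>r. r \<in> L \<Longrightarrow> 1 \<le> v r"
    "\<And>r. r \<in> L \<Longrightarrow> (\<Sum>s\<in>L. p r s * v s) = v r + u r"
    using positive_stochastic.poisson_solvable_ge[where c = 1, OF p \<nu>] by blast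
  have "(\<Sum>r\<in>L. \<mu> r * u r) = 1"
    using weighted \<mu> \<open>\<nu> r0 \<noteq> \<mu> r0\<close> by (simp add: invariant_distribution_on_def d_def)
  then have "(\<Sum>r\<in>L. \<mu> r * (1 - u r)) = 0"
    using \<mu> by (simp add: invariant_distribution_on_def right_diff_distrib sum_subtractf)
  then obtain w where w: "\<And>r. r \<in> L \<Longrightarrow> 1 \<le> w r"
    "\<And>r. r \<in> L \<Longrightarrow> (\<Sum>s\<in>L. q r s * w s) = w r + (1 - u r)"
    using positive_stochastic.poisson_solvable_ge[where c = 1 and u = "\<lambda>r. 1 - u r", OF q \<mu>] by blast
  show thesis
    using v w by (intro that[of v w]) auto
qed

lemma lin_orders_nonempty: "lin_orders \<noteq> {}"
proof -
  obtain r :: "'a rel" where "strict_linear_order_on UNIV r"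
    by (meson well_order_on well_order_on_def strict_linear_order_on_diff_Id)
  then show ?thesis
    unfolding lin_orders_def by auto
qed

lemma positive_stochastic_markov_entry:
  fixes t :: "'a::finite \<Rightarrow> 'a rel \<Rightarrow> 'a rel \<Rightarrow> real"
  assumes "transition_fun t" and "full_support t"
  shows "positive_stochastic lin_orders (markov_entry t A)"
  using assms by unfold_locales (simp_all add: transition_fun_def full_support_def markov_entry_def)

lemma stationary_iff_invariant_distribution_on:
  "stationary t A \<nu> \<longleftrightarrow>
     (\<forall>r. r \<notin> lin_orders \<longrightarrow> \<nu> r = 0) \<and> invariant_distribution_on lin_orders (markov_entry t A) \<nu>"
  by (auto simp: stationary_def invariant_distribution_on_def invariant_on_def)

lemma stationary_stat_dist:
  fixes t :: "'a::finite \<Rightarrow> 'a rel \<Rightarrow> 'a rel \<Rightarrow> real"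
  assumes "transition_fun t" and "full_support t"
  shows "stationary t A (stat_dist t A)"
proof -
  interpret positive_stochastic lin_orders "markov_entry t A"
    using assms by (rule positive_stochastic_markov_entry)
  obtain \<nu> where "invariant_distribution_on lin_orders (markov_entry t A) \<nu>"
    and "\<And>r. r \<notin> lin_orders \<Longrightarrow> \<nu> r = 0"
    using ex_invariant_distribution_on[OF lin_orders_nonempty] by blast
  then have \<nu>: "stationary t A \<nu>"
    by (simp add: stationary_iff_invariant_distribution_on)
  have "\<mu> = \<nu>" if "stationary t A \<mu>" for \<mu>
  proof
    fix r
    show "\<mu> r = \<nu> r"
      using that \<nu> invariant_distribution_on_unique[of \<mu> \<nu> r]
      by (cases "r \<in> lin_orders") (simp_all add: stationary_iff_invariant_distribution_on)
  qed
  with \<nu> show ?thesis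
    unfolding stat_dist_def by (rule theI)
qed

lemma invariant_distribution_on_stat_dist:
  fixes t :: "'a::finite \<Rightarrow> 'a rel \<Rightarrow> 'a rel \<Rightarrow> real"
  assumes "transition_fun t" and "full_support t"
  shows "invariant_distribution_on lin_orders (markov_entry t A) (stat_dist t A)"
  using stationary_stat_dist[OF assms] by (simp add: stationary_iff_invariant_distribution_on)

lemma menu_invariant_imp_no_investment:
  fixes t :: "'a::finite \<Rightarrow> 'a rel \<Rightarrow> 'a rel \<Rightarrow> real"
  assumes tf: "transition_fun t" and fs: "full_support t" and "menu_invariant t"
  shows "no_investment t"
  unfolding no_investment_def
proof (intro allI impI)
  fix i :: "'a set \<Rightarrow> 'a rel \<Rightarrow> real" and \<delta> :: real
  assume plan: "investment_plan i \<and> strict_plan i" and \<delta>: "0 < \<delta> \<and> \<delta> < 1"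
  then obtain A0 r0 where A0: "A0 \<in> menus2" and r0: "r0 \<in> lin_orders" and "i A0 r0 \<noteq> 0"
    by (auto simp: strict_plan_def)
  define \<nu> where "\<nu> = stat_dist t A0"
  have inv: "invariant_on lin_orders (markov_entry t A) \<nu>" if "A \<in> menus2" for A
  proof -
    have "stat_dist t A = \<nu>"
      using \<open>menu_invariant t\<close> that A0 unfolding menu_invariant_def \<nu>_def by blast
    then show ?thesis
      using invariant_distribution_on_stat_dist[OF tf fs, of A] by (simp add: invariant_distribution_on_def)
  qed
  have pos: "0 < \<nu> r" if "r \<in> lin_orders" for r
    unfolding \<nu>_def
    by (rule positive_stochastic.invariant_distribution_on_pos[OF positive_stochastic_markov_entry[OF tf fs]
          invariant_distribution_on_stat_dist[OF tf fs] that])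
  have "\<exists>r\<in>lin_orders. (\<Sum>A\<in>menus2. \<Sum>r'\<in>lin_orders. \<delta> * i A r' * markov_entry t A r r')
      < (\<Sum>A\<in>menus2. i A r)"
    using plan \<delta>
    by (intro ex_discounted_return_less[where P = "markov_entry t" and i = i,
          OF _ _ pos inv _ A0 r0 \<open>i A0 r0 \<noteq> 0\<close>])
      (simp_all add: investment_plan_def)
  then show "\<exists>r\<in>lin_orders. (\<Sum>A\<in>menus2. \<Sum>r'\<in>lin_orders. \<delta> * i A r' * t (maxel r A) r r')
      < (\<Sum>A\<in>menus2. i A r)"
    by (simp add: markov_entry_def)
qed

lemma potentials_imp_not_no_investment:
  fixes t :: "'a::finite \<Rightarrow> 'a rel \<Rightarrow> 'a rel \<Rightarrow> real"
  assumes "A \<in> menus2" "B \<in> menus2" "A \<noteq> B"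
    and v: "\<And>r. r \<in> lin_orders \<Longrightarrow> 1 \<le> v r" and w: "\<And>r. r \<in> lin_orders \<Longrightarrow> 1 \<le> w r"
    and return: "\<And>r. r \<in> lin_orders \<Longrightarrow>
      (\<Sum>s\<in>lin_orders. markov_entry t A r s * v s) + (\<Sum>s\<in>lin_orders. markov_entry t B r s * w s)
        = v r + w r + 1"
  shows "\<not> no_investment t"
proof
  assume "no_investment t"
  define i where "i C r = (if C = A then v r else 0) + (if C = B then w r else 0)" for C r
  define W where "W = (\<Sum>r\<in>lin_orders. v r + w r)"
  define \<delta> :: real where "\<delta> = (W + 1) / (W + 2)"
  have vw_nonneg: "0 \<le> v r" "0 \<le> w r" if "r \<in> lin_orders" for r
    using v[OF that] w[OF that] by simp_all
  have "0 \<le> W"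
    unfolding W_def using vw_nonneg by (simp add: sum_nonneg)
  then have "0 < \<delta> \<and> \<delta> < 1"
    by (simp add: \<delta>_def)
  moreover have "investment_plan i"
    unfolding investment_plan_def i_def using vw_nonneg by simp
  moreover have "strict_plan i"
  proof -
    obtain r1 :: "'a rel" where "r1 \<in> lin_orders"
      using lin_orders_nonempty by blast
    moreover have "i A r1 \<noteq> 0"
      using v[OF \<open>r1 \<in> lin_orders\<close>] \<open>A \<noteq> B\<close> by (simp add: i_def)
    ultimately show ?thesis
      using \<open>A \<in> menus2\<close> unfolding strict_plan_def by blast
  qed
  ultimately obtain r where "r \<in> lin_orders" and less:
    "(\<Sum>C\<in>menus2. \<Sum>r'\<in>lin_orders. \<delta> * i C r' * t (maxel r C) r r') < (\<Sum>C\<in>menus2. i C r)"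
    using \<open>no_investment t\<close> unfolding no_investment_def by blast
  have "(\<Sum>C\<in>menus2. i C r) = v r + w r"
    using \<open>A \<in> menus2\<close> \<open>B \<in> menus2\<close> \<open>A \<noteq> B\<close> by (simp add: i_def sum.distrib)
  moreover have "(\<Sum>C\<in>menus2. \<Sum>r'\<in>lin_orders. \<delta> * i C r' * t (maxel r C) r r') = \<delta> * (v r + w r + 1)"
  proof -
    let ?PA = "\<Sum>s\<in>lin_orders. markov_entry t A r s * v s"
    let ?PB = "\<Sum>s\<in>lin_orders. markov_entry t B r s * w s"
    have "(\<Sum>r'\<in>lin_orders. \<delta> * i C r' * t (maxel r C) r r')
        = (if C = A then \<delta> * ?PA else 0) + (if C = B then \<delta> * ?PB else 0)" for C
      using \<open>A \<noteq> B\<close> by (cases "C = A"; cases "C = B")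
        (simp_all add: i_def markov_entry_def sum_distrib_left mult_ac)
    then have "(\<Sum>C\<in>menus2. \<Sum>r'\<in>lin_orders. \<delta> * i C r' * t (maxel r C) r r') = \<delta> * (?PA + ?PB)"
      using \<open>A \<in> menus2\<close> \<open>B \<in> menus2\<close> by (simp add: sum.distrib distrib_left)
    with return[OF \<open>r \<in> lin_orders\<close>] show ?thesis
      by simp
  qed
  moreover have "v r + w r \<le> \<delta> * (v r + w r + 1)"
  proof -
    have "v r + w r \<le> W"
      unfolding W_def using \<open>r \<in> lin_orders\<close> vw_nonneg by (intro member_le_sum) auto
    with \<open>0 \<le> W\<close> show ?thesis
      by (simp add: \<delta>_def field_simps)
  qed
  ultimately show False
    using less by simp
qed

lemma no_investment_imp_menu_invariant:
  fixes t :: "'a::finite \<Rightarrow> 'a rel \<Rightarrow> 'a rel \<Rightarrow> real"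
  assumes tf: "transition_fun t" and fs: "full_support t" and "no_investment t"
  shows "menu_invariant t"
proof (rule ccontr)
  assume "\<not> menu_invariant t"
  then obtain A B where "A \<in> menus2" "B \<in> menus2" and differ: "stat_dist t A \<noteq> stat_dist t B"
    by (auto simp: menu_invariant_def)
  then obtain r0 where r0: "stat_dist t A r0 \<noteq> stat_dist t B r0"
    by (auto simp: fun_eq_iff)
  have "stat_dist t C r = 0" if "r \<notin> lin_orders" for C r
    using stationary_stat_dist[OF tf fs, of C] that by (simp add: stationary_def)
  with r0 have "r0 \<in> lin_orders"
    by metis
  obtain v w where "\<And>r. r \<in> lin_orders \<Longrightarrow> 1 \<le> v r" "\<And>r. r \<in> lin_orders \<Longrightarrow> 1 \<le> w r"
    "\<And>r. r \<in> lin_orders \<Longrightarrow>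
      (\<Sum>s\<in>lin_orders. markov_entry t A r s * v s) + (\<Sum>s\<in>lin_orders. markov_entry t B r s * w s)
        = v r + w r + 1"
    using ex_potentials_if_invariant_distributions_differ[OF
          positive_stochastic_markov_entry[OF tf fs] positive_stochastic_markov_entry[OF tf fs]
          invariant_distribution_on_stat_dist[OF tf fs] invariant_distribution_on_stat_dist[OF tf fs]
          \<open>r0 \<in> lin_orders\<close> r0]
    by blast
  moreover have "A \<noteq> B"
    using differ by blast
  ultimately show False
    using potentials_imp_not_no_investment \<open>A \<in> menus2\<close> \<open>B \<in> menus2\<close> \<open>no_investment t\<close> by blast
qed

theorem theorem2:
  fixes t :: "'a::finite \<Rightarrow> 'a rel \<Rightarrow> 'a rel \<Rightarrow> real"
  assumes "transition_fun t" and "full_support t"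
  shows "menu_invariant t \<longleftrightarrow> no_investment t"
  using menu_invariant_imp_no_investment[OF assms] no_investment_imp_menu_invariant[OF assms] by blast

end
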